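(* Cobordism is an equivalence relation on $\mathcal{S}_2$; in particular, every $G\in\mathcal{S}_2$ is cobordant to itself, i.e. there is a three-dimensional geometric graph with boundary $H$ whose boundary is isomorphic to the disjoint union of two copies of $G$.
   Context: All graphs are finite simple graphs. For a vertex $x$, $S(x)$ is the subgraph induced by the neighbors of $x$. A graph is contractible if it is $K_1$, or, inductively, if there is a vertex $x$ with both $S(x)$ and the subgraph induced by $V\setminus\{x\}$ contractible. $\mathcal{G}_0$: graphs without edges; $\mathcal{S}_0$: those with two vertices; $\mathcal{B}_0$: those with one vertex. For $d\ge1$: $\mathcal{G}_d$ is the class of graphs in which every $S(x)$ lies in $\mathcal{S}_{d-1}\cup\mathcal{B}_{d-1}$; the boundary $\delta G$ is the subgraph induced by vertices with $S(x)\in\mathcal{B}_{d-1}$, and the interior (other vertices) must be nonempty; $\mathcal{B}_d$: contractible graphs in $\mathcal{G}_d$ with boundary in $\mathcal{S}_{d-1}$; $\mathcal{S}_d$: non-contractible graphs in $\mathcal{G}_d$ such that removing any single vertex yields a graph in $\mathcal{B}_d$. A three-dimensional geometric graph with boundary is a graph in which every unit sphere lies in $\mathcal{S}_2\cup\mathcal{B}_2$ (i.e. a graph in $\mathcal{G}_3$). Two graphs $G_1,G_2$ (two-dimensional, without boundary) are cobordant if there is a three-dimensional geometric graph with boundary $H$ such that the boundary $\delta H$ is the disjoint union $G_1\sqcup G_2$. *)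

theory Defs
  imports Main
begin

type_synonym 'a graph = "'a set \<times> ('a \<times> 'a) set"

definition verts :: "'a graph \<Rightarrow> 'a set" where "verts G = fst G"
definition edges :: "'a graph \<Rightarrow> ('a \<times> 'a) set" where "edges G = snd G"

definition is_graph :: "'a graph \<Rightarrow> bool" where
  "is_graph G \<longleftrightarrow> finite (verts G) \<and> edges G \<subseteq> verts G \<times> verts G
     \<and> (\<forall>x y. (x, y) \<in> edges G \<longrightarrow> (y, x) \<in> edges G)
     \<and> (\<forall>x. (x, x) \<notin> edges G)"

definition induce :: "'a graph \<Rightarrow> 'a set \<Rightarrow> 'a graph" where
  "induce G W = (verts G \<inter> W, edges G \<inter> ((verts G \<inter> W) \<times> (verts G \<inter> W)))"

definition sphere :: "'a graph \<Rightarrow> 'a \<Rightarrow> 'a graph" where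
  "sphere G x = induce G {y. (x, y) \<in> edges G}"

inductive contractible :: "'a graph \<Rightarrow> bool" where
  K1: "is_graph G \<Longrightarrow> card (verts G) = 1 \<Longrightarrow> contractible G"
| step: "is_graph G \<Longrightarrow> x \<in> verts G \<Longrightarrow> contractible (sphere G x)
     \<Longrightarrow> contractible (induce G (verts G - {x})) \<Longrightarrow> contractible G"

definition bdry :: "('a graph \<Rightarrow> bool) \<Rightarrow> 'a graph \<Rightarrow> 'a graph" where
  "bdry B G = induce G {x \<in> verts G. B (sphere G x)}"

text \<open>G_d from S_{d-1}, B_{d-1} (d \<ge> 1): every unit sphere in S_{d-1} \<union> B_{d-1},
  interior nonempty.\<close>
definition Gstep :: "('a graph \<Rightarrow> bool) \<Rightarrow> ('a graph \<Rightarrow> bool) \<Rightarrow> 'a graph \<Rightarrow> bool" where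
  "Gstep S B G \<longleftrightarrow> is_graph G
     \<and> (\<forall>x \<in> verts G. S (sphere G x) \<or> B (sphere G x))
     \<and> (\<exists>x \<in> verts G. \<not> B (sphere G x))"

definition Bstep :: "('a graph \<Rightarrow> bool) \<Rightarrow> ('a graph \<Rightarrow> bool) \<Rightarrow> 'a graph \<Rightarrow> bool" where
  "Bstep S B G \<longleftrightarrow> Gstep S B G \<and> contractible G \<and> S (bdry B G)"

definition Sstep :: "('a graph \<Rightarrow> bool) \<Rightarrow> ('a graph \<Rightarrow> bool) \<Rightarrow> 'a graph \<Rightarrow> bool" where
  "Sstep S B G \<longleftrightarrow> Gstep S B G \<and> \<not> contractible G
     \<and> (\<forall>x \<in> verts G. Bstep S B (induce G (verts G - {x})))"

primrec SB :: "nat \<Rightarrow> ('a graph \<Rightarrow> bool) \<times> ('a graph \<Rightarrow> bool)" where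
  "SB 0 = ((\<lambda>G. is_graph G \<and> edges G = {} \<and> card (verts G) = 2),
           (\<lambda>G. is_graph G \<and> edges G = {} \<and> card (verts G) = 1))"
| "SB (Suc d) = (Sstep (fst (SB d)) (snd (SB d)), Bstep (fst (SB d)) (snd (SB d)))"

definition Sd :: "nat \<Rightarrow> 'a graph \<Rightarrow> bool" where "Sd d = fst (SB d)"
definition Bd :: "nat \<Rightarrow> 'a graph \<Rightarrow> bool" where "Bd d = snd (SB d)"

definition Gd :: "nat \<Rightarrow> 'a graph \<Rightarrow> bool" where
  "Gd d G = (if d = 0 then is_graph G \<and> edges G = {} else Gstep (Sd (d - 1)) (Bd (d - 1)) G)"

definition delta :: "nat \<Rightarrow> 'a graph \<Rightarrow> 'a graph" where
  "delta d G = bdry (Bd (d - 1)) G"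

definition graph_iso :: "'a graph \<Rightarrow> 'b graph \<Rightarrow> bool" where
  "graph_iso G H \<longleftrightarrow> (\<exists>f. bij_betw f (verts G) (verts H)
     \<and> (\<forall>x \<in> verts G. \<forall>y \<in> verts G. (x, y) \<in> edges G \<longleftrightarrow> (f x, f y) \<in> edges H))"

definition disj_union :: "'a graph \<Rightarrow> 'b graph \<Rightarrow> ('a + 'b) graph" where
  "disj_union G H = (verts G <+> verts H,
     (\<lambda>(x,y). (Inl x, Inl y)) ` edges G \<union> (\<lambda>(x,y). (Inr x, Inr y)) ` edges H)"

text \<open>Cobordism: some three-dimensional geometric graph with boundary H (vertices
  taken in nat, which is no restriction for finite graphs) has boundary isomorphic to
  the disjoint union.\<close>
definition cobordant :: "'a graph \<Rightarrow> 'a graph \<Rightarrow> bool" where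
  "cobordant G1 G2 \<longleftrightarrow> (\<exists>H :: nat graph. Gd 3 H \<and> graph_iso (delta 3 H) (disj_union G1 G2))"

end

theory Submission
  imports Defs
begin

text \<open>Any two graphs in \<open>S\<^sub>2\<close> are cobordant, so cobordism is the full relation on \<open>S\<^sub>2\<close>.
  The cone over \<open>G \<in> S\<^sub>2\<close> is a three-dimensional geometric graph with boundary \<open>G\<close>: the
  unit sphere of the apex is \<open>G\<close> itself, and the unit sphere of any other vertex \<open>v\<close> is the
  cone over the circle \<open>S(v) \<in> S\<^sub>1\<close>, which is a disc in \<open>B\<^sub>2\<close> for the same reason one
  dimension lower. The disjoint union of the cones over \<open>G\<^sub>1\<close> and \<open>G\<^sub>2\<close> then has boundary
  \<open>G\<^sub>1 \<sqcup> G\<^sub>2\<close>. What needs an argument is that unit spheres of graphs in \<open>S\<^sub>2\<close> lie in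
  \<open>S\<^sub>1\<close> (and those of graphs in \<open>S\<^sub>1\<close> in \<open>S\<^sub>0\<close>) rather than in \<open>B\<^sub>1\<close>: a boundary vertex of
  such a sphere would become isolated in a unit sphere after deleting one suitable vertex.
  All notions are invariant under injective relabelling, which moves the witness to the
  vertex type \<open>nat\<close> required by \<open>cobordant\<close>.\<close>

definition map_graph :: "('a \<Rightarrow> 'b) \<Rightarrow> 'a graph \<Rightarrow> 'b graph" where
  "map_graph f G = (f ` verts G, map_prod f f ` edges G)"

lemma verts_map_graph [simp]: "verts (map_graph f G) = f ` verts G"
  by (simp add: map_graph_def verts_def)

lemma edges_map_graph [simp]: "edges (map_graph f G) = map_prod f f ` edges G"
  by (simp add: map_graph_def edges_def)

lemma verts_induce [simp]: "verts (induce G W) = verts G \<inter> W"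
  by (simp add: induce_def verts_def)

lemma edges_induce [simp]:
  "edges (induce G W) = edges G \<inter> ((verts G \<inter> W) \<times> (verts G \<inter> W))"
  by (simp add: induce_def edges_def)

lemma verts_sphere: "verts (sphere G x) = verts G \<inter> {y. (x, y) \<in> edges G}"
  by (simp add: sphere_def)

lemma graph_eqI: "verts G = verts H \<Longrightarrow> edges G = edges H \<Longrightarrow> G = H"
  by (simp add: verts_def edges_def prod_eq_iff)

lemma is_graph_induce: "is_graph G \<Longrightarrow> is_graph (induce G W)"
  unfolding is_graph_def by auto

lemma is_graph_sphere: "is_graph G \<Longrightarrow> is_graph (sphere G x)"
  unfolding sphere_def by (rule is_graph_induce)

lemma is_graph_map_graph: "is_graph G \<Longrightarrow> inj_on f (verts G) \<Longrightarrow> is_graph (map_graph f G)"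
  unfolding is_graph_def inj_on_def by auto blast

lemma map_graph_inv_into:
  assumes "is_graph G" and "inj_on f (verts G)"
  shows "map_graph (inv_into (verts G) f) (map_graph f G) = G"
proof -
  have "edges G \<subseteq> verts G \<times> verts G"
    using assms(1) by (simp add: is_graph_def)
  then have "map_prod (inv_into (verts G) f) (inv_into (verts G) f) ` map_prod f f ` edges G
      = (\<lambda>p. p) ` edges G"
    unfolding image_image using assms(2) by (intro image_cong) auto
  then show ?thesis
    by (intro graph_eqI) (simp_all add: image_image assms(2))
qed

lemma graph_iso_map_graph:
  assumes "is_graph G" and "inj_on f (verts G)"
  shows "graph_iso G (map_graph f G)"
  unfolding graph_iso_def
proof (intro exI conjI ballI)
  show "bij_betw f (verts G) (verts (map_graph f G))"
    using assms(2) by (simp add: inj_on_imp_bij_betw)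
  have "edges G \<subseteq> verts G \<times> verts G"
    using assms(1) by (simp add: is_graph_def)
  then show "(x, y) \<in> edges G \<longleftrightarrow> (f x, f y) \<in> edges (map_graph f G)"
    if "x \<in> verts G" "y \<in> verts G" for x y
    using that assms(2) by (auto dest: inj_onD)
qed

lemma graph_iso_sym:
  assumes "graph_iso G H"
  shows "graph_iso H G"
proof -
  obtain f where f: "bij_betw f (verts G) (verts H)"
    and e: "\<forall>x \<in> verts G. \<forall>y \<in> verts G. (x, y) \<in> edges G \<longleftrightarrow> (f x, f y) \<in> edges H"
    using assms unfolding graph_iso_def by blast
  let ?g = "inv_into (verts G) f"
  have "(u, v) \<in> edges H \<longleftrightarrow> (?g u, ?g v) \<in> edges G" if "u \<in> verts H" "v \<in> verts H" for u v
    using e f that bij_betw_inv_into_right[OF f] bij_betwE[OF bij_betw_inv_into[OF f]] by metis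
  then show ?thesis
    unfolding graph_iso_def using bij_betw_inv_into[OF f] by blast
qed

lemma graph_iso_trans:
  assumes "graph_iso G H" and "graph_iso H K"
  shows "graph_iso G K"
proof -
  obtain f where f: "bij_betw f (verts G) (verts H)"
    and ef: "\<forall>x \<in> verts G. \<forall>y \<in> verts G. (x, y) \<in> edges G \<longleftrightarrow> (f x, f y) \<in> edges H"
    using assms(1) unfolding graph_iso_def by blast
  obtain g where g: "bij_betw g (verts H) (verts K)"
    and eg: "\<forall>x \<in> verts H. \<forall>y \<in> verts H. (x, y) \<in> edges H \<longleftrightarrow> (g x, g y) \<in> edges K"
    using assms(2) unfolding graph_iso_def by blast
  show ?thesis
    unfolding graph_iso_def
    using bij_betw_trans[OF f g] ef eg bij_betwE[OF f] by (metis comp_apply)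
qed

subsection \<open>Invariance under injective relabelling\<close>

lemma induce_map_graph:
  assumes "is_graph G" and "inj_on f (verts G)" and "W \<subseteq> verts G"
  shows "induce (map_graph f G) (f ` W) = map_graph f (induce G W)"
proof -
  have "edges G \<subseteq> verts G \<times> verts G"
    using assms(1) by (simp add: is_graph_def)
  then have "map_prod f f ` edges G \<inter> (f ` W \<times> f ` W) \<subseteq> map_prod f f ` (edges G \<inter> (W \<times> W))"
    using inj_on_image_mem_iff[OF assms(2) _ assms(3)] by blast
  then have "map_prod f f ` edges G \<inter> (f ` W \<times> f ` W) = map_prod f f ` (edges G \<inter> (W \<times> W))"
    by blast
  moreover have "verts G \<inter> W = W" "f ` verts G \<inter> f ` W = f ` W"
    using assms(3) by blast+
  ultimately show ?thesis
    by (intro graph_eqI) simp_all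
qed

lemma sphere_map_graph:
  assumes "is_graph G" and "inj_on f (verts G)" and "x \<in> verts G"
  shows "sphere (map_graph f G) (f x) = map_graph f (sphere G x)"
proof -
  have "{y. (f x, y) \<in> edges (map_graph f G)} = f ` {y. (x, y) \<in> edges G}"
    using assms unfolding is_graph_def inj_on_def by auto
  moreover have "{y. (x, y) \<in> edges G} \<subseteq> verts G"
    using assms(1) by (auto simp: is_graph_def)
  ultimately show ?thesis
    unfolding sphere_def using induce_map_graph[OF assms(1,2)] by simp
qed

lemma delete_map_graph:
  assumes "is_graph G" and "inj_on f (verts G)" and "x \<in> verts G"
  shows "induce (map_graph f G) (verts (map_graph f G) - {f x})
    = map_graph f (induce G (verts G - {x}))"
proof -
  have "verts (map_graph f G) - {f x} = f ` (verts G - {x})"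
    using assms by (auto simp: inj_on_def)
  then show ?thesis
    using induce_map_graph[OF assms(1,2), of "verts G - {x}"] by simp
qed

lemma contractible_map_graph_imp:
  "contractible G \<Longrightarrow> inj_on f (verts G) \<Longrightarrow> contractible (map_graph f G)"
proof (induction arbitrary: f rule: contractible.induct)
  case (K1 G)
  then show ?case
    by (intro contractible.K1) (auto simp: is_graph_map_graph card_image)
next
  case (step G x)
  show ?case
  proof (rule contractible.step[of _ "f x"])
    show "is_graph (map_graph f G)"
      using step is_graph_map_graph by blast
    show "f x \<in> verts (map_graph f G)"
      using step by simp
    have "inj_on f (verts (sphere G x))"
      using step.prems by (rule inj_on_subset) (simp add: sphere_def)
    then show "contractible (sphere (map_graph f G) (f x))"
      using step.IH(1) sphere_map_graph[OF step.hyps(1) step.prems step.hyps(2)] by simp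
    have "inj_on f (verts (induce G (verts G - {x})))"
      using step.prems by (rule inj_on_subset) simp
    then show "contractible (induce (map_graph f G) (verts (map_graph f G) - {f x}))"
      using step.IH(2) delete_map_graph[OF step.hyps(1) step.prems step.hyps(2)] by simp
  qed
qed

lemma contractible_map_graph_iff:
  assumes "is_graph G" and "inj_on f (verts G)"
  shows "contractible (map_graph f G) \<longleftrightarrow> contractible G"
proof
  assume "contractible (map_graph f G)"
  then have "contractible (map_graph (inv_into (verts G) f) (map_graph f G))"
    by (rule contractible_map_graph_imp) (simp add: inj_on_inv_into)
  then show "contractible G"
    using map_graph_inv_into[OF assms] by simp
qed (use assms(2) contractible_map_graph_imp in blast)

locale relabelling =
  fixes S B :: "'a graph \<Rightarrow> bool" and S' B' :: "'b graph \<Rightarrow> bool" and f :: "'a \<Rightarrow> 'b"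
  assumes S_map_graph: "\<And>G. is_graph G \<Longrightarrow> inj_on f (verts G) \<Longrightarrow> S' (map_graph f G) = S G"
    and B_map_graph: "\<And>G. is_graph G \<Longrightarrow> inj_on f (verts G) \<Longrightarrow> B' (map_graph f G) = B G"
begin

context
  fixes G :: "'a graph"
  assumes graph: "is_graph G" and inj: "inj_on f (verts G)"
begin

lemma sphere_map_graph_classes:
  assumes "x \<in> verts G"
  shows "S' (sphere (map_graph f G) (f x)) = S (sphere G x)"
    and "B' (sphere (map_graph f G) (f x)) = B (sphere G x)"
proof -
  have "inj_on f (verts (sphere G x))"
    using inj by (rule inj_on_subset) (simp add: sphere_def)
  then show "S' (sphere (map_graph f G) (f x)) = S (sphere G x)"
    and "B' (sphere (map_graph f G) (f x)) = B (sphere G x)"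
    using S_map_graph B_map_graph is_graph_sphere[OF graph] sphere_map_graph[OF graph inj assms]
    by simp_all
qed

lemma Gstep_map_graph: "Gstep S' B' (map_graph f G) = Gstep S B G"
  unfolding Gstep_def using sphere_map_graph_classes is_graph_map_graph[OF graph inj] graph by auto

lemma bdry_map_graph: "bdry B' (map_graph f G) = map_graph f (bdry B G)"
proof -
  have "{y \<in> verts (map_graph f G). B' (sphere (map_graph f G) y)}
      = f ` {x \<in> verts G. B (sphere G x)}"
    using sphere_map_graph_classes(2) by auto
  then show ?thesis
    unfolding bdry_def using induce_map_graph[OF graph inj, of "{x \<in> verts G. B (sphere G x)}"]
    by auto
qed

lemma Bstep_map_graph: "Bstep S' B' (map_graph f G) = Bstep S B G"
proof -
  have "inj_on f (verts (bdry B G))"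
    using inj by (rule inj_on_subset) (auto simp: bdry_def)
  then show ?thesis
    unfolding Bstep_def bdry_def
    using Gstep_map_graph contractible_map_graph_iff[OF graph inj] bdry_map_graph
      S_map_graph[OF is_graph_induce[OF graph]]
    by (simp add: bdry_def)
qed

end

lemma Sstep_map_graph:
  assumes graph: "is_graph G" and inj: "inj_on f (verts G)"
  shows "Sstep S' B' (map_graph f G) = Sstep S B G"
proof -
  have "Bstep S' B' (induce (map_graph f G) (verts (map_graph f G) - {f x}))
      = Bstep S B (induce G (verts G - {x}))" if "x \<in> verts G" for x
  proof -
    have "inj_on f (verts (induce G (verts G - {x})))"
      using inj by (rule inj_on_subset) simp
    then show ?thesis
      using delete_map_graph[OF graph inj that] Bstep_map_graph[OF is_graph_induce[OF graph]]
      by simp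
  qed
  then show ?thesis
    unfolding Sstep_def using Gstep_map_graph[OF graph inj] contractible_map_graph_iff[OF graph inj]
    by auto
qed

end

subsection \<open>The classes \<open>S\<^sub>d\<close> and \<open>B\<^sub>d\<close>\<close>

lemma Sd_0: "Sd 0 G \<longleftrightarrow> is_graph G \<and> edges G = {} \<and> card (verts G) = 2"
  by (simp add: Sd_def)

lemma Bd_0: "Bd 0 G \<longleftrightarrow> is_graph G \<and> edges G = {} \<and> card (verts G) = 1"
  by (simp add: Bd_def)

lemma Sd_Suc: "Sd (Suc d) = Sstep (Sd d) (Bd d)"
  by (simp add: Sd_def Bd_def)

lemma Bd_Suc: "Bd (Suc d) = Bstep (Sd d) (Bd d)"
  by (simp add: Sd_def Bd_def)

lemma Sd_1: "Sd 1 = Sstep (Sd 0) (Bd 0)" and Bd_1: "Bd 1 = Bstep (Sd 0) (Bd 0)"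
  by (simp_all only: One_nat_def Sd_Suc Bd_Suc)

lemma Sd_2: "Sd 2 = Sstep (Sd 1) (Bd 1)" and Bd_2: "Bd 2 = Bstep (Sd 1) (Bd 1)"
  by (simp_all only: numeral_2_eq_2 One_nat_def Sd_Suc Bd_Suc)

lemma Gd_3: "Gd 3 = Gstep (Sd 2) (Bd 2)"
  by (rule ext) (simp add: Gd_def)

lemma delta_3: "delta 3 H = bdry (Bd 2) H"
  by (simp add: delta_def)

lemma Sd_is_graph: "Sd d G \<Longrightarrow> is_graph G"
  by (cases d) (auto simp: Sd_0 Sd_Suc Sstep_def Gstep_def)

lemma Sd_not_Bd: "Sd d G \<Longrightarrow> \<not> Bd d G"
  by (cases d) (auto simp: Sd_0 Bd_0 Sd_Suc Bd_Suc Sstep_def Bstep_def)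

lemma Sd_Bd_map_graph:
  "is_graph G \<Longrightarrow> inj_on f (verts G) \<Longrightarrow> Sd d (map_graph f G) = Sd d G \<and> Bd d (map_graph f G) = Bd d G"
proof (induction d arbitrary: G)
  case 0
  then show ?case
    by (auto simp: Sd_0 Bd_0 card_image is_graph_map_graph)
next
  case (Suc d)
  interpret relabelling "Sd d" "Bd d" "Sd d" "Bd d" f
    using Suc.IH by unfold_locales blast+
  show ?case
    unfolding Sd_Suc Bd_Suc using Sstep_map_graph[OF Suc.prems] Bstep_map_graph[OF Suc.prems]
    by simp
qed

lemma Gstep_sphere: "Gstep S B G \<Longrightarrow> x \<in> verts G \<Longrightarrow> S (sphere G x) \<or> B (sphere G x)"
  by (simp add: Gstep_def)

lemma Sd_0_or_Bd_0_nonempty: "Sd 0 G \<or> Bd 0 G \<Longrightarrow> verts G \<noteq> {}"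
  by (auto simp: Sd_0 Bd_0)

text \<open>If the unit sphere of \<open>v\<close> were a single vertex \<open>a\<close>, then \<open>v\<close> would be isolated in the
  ball obtained by deleting \<open>a\<close>.\<close>

lemma sphere_Sd_1:
  assumes K: "Sd 1 K" and v: "v \<in> verts K"
  shows "Sd 0 (sphere K v)"
proof (rule ccontr)
  assume "\<not> Sd 0 (sphere K v)"
  have KS: "Sstep (Sd 0) (Bd 0) K"
    using K unfolding Sd_1 .
  then have "Bd 0 (sphere K v)"
    using \<open>\<not> Sd 0 (sphere K v)\<close> Gstep_sphere[OF _ v] by (auto simp: Sstep_def)
  then obtain a where a: "verts (sphere K v) = {a}"
    by (auto simp: Bd_0 card_1_singleton_iff)
  then have "(v, a) \<in> edges K" "a \<in> verts K"
    by (auto simp: verts_sphere)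
  moreover have "is_graph K"
    using KS by (simp add: Sstep_def Gstep_def)
  ultimately have "a \<noteq> v"
    by (auto simp: is_graph_def)
  let ?K' = "induce K (verts K - {a})"
  have "Gstep (Sd 0) (Bd 0) ?K'"
    using KS \<open>a \<in> verts K\<close> unfolding Sstep_def Bstep_def by blast
  moreover have "v \<in> verts ?K'"
    using v \<open>a \<noteq> v\<close> by simp
  ultimately have "verts (sphere ?K' v) \<noteq> {}"
    by (intro Sd_0_or_Bd_0_nonempty Gstep_sphere)
  moreover have "verts (sphere ?K' v) = {}"
    using a by (auto simp: verts_sphere)
  ultimately show False
    by simp
qed

text \<open>If the unit sphere \<open>P\<close> of \<open>v\<close> were a disc, it would have a boundary vertex \<open>a\<close> with a single
  neighbour \<open>w\<close> in \<open>P\<close>. Deleting \<open>w\<close> from \<open>K\<close> leaves a ball in which \<open>a\<close> is isolated in the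
  unit sphere of \<open>v\<close>.\<close>

lemma sphere_Sd_2:
  assumes K: "Sd 2 K" and v: "v \<in> verts K"
  shows "Sd 1 (sphere K v)"
proof (rule ccontr)
  assume "\<not> Sd 1 (sphere K v)"
  have KS: "Sstep (Sd 1) (Bd 1) K"
    using K unfolding Sd_2 .
  define P where "P = sphere K v"
  have "Bd 1 P"
    using \<open>\<not> Sd 1 (sphere K v)\<close> Gstep_sphere[OF _ v] KS by (auto simp: Sstep_def P_def)
  then have "Sd 0 (bdry (Bd 0) P)"
    unfolding Bd_1 Bstep_def by blast
  then obtain a where a: "a \<in> verts P" "Bd 0 (sphere P a)"
    using Sd_0_or_Bd_0_nonempty[of "bdry (Bd 0) P"] by (auto simp: bdry_def)
  then obtain w where w: "verts (sphere P a) = {w}"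
    by (auto simp: Bd_0 card_1_singleton_iff)
  have edges: "(v, a) \<in> edges K" "(a, w) \<in> edges K" "(v, w) \<in> edges K" "a \<in> verts K"
    "w \<in> verts K"
    using a(1) w by (auto simp: verts_sphere P_def sphere_def)
  moreover have "is_graph K"
    using KS by (simp add: Sstep_def Gstep_def)
  ultimately have "a \<noteq> v" "w \<noteq> v" "a \<noteq> w"
    by (auto simp: is_graph_def)
  define K' where "K' = induce K (verts K - {w})"
  have "Gstep (Sd 1) (Bd 1) K'"
    using KS edges(5) unfolding Sstep_def Bstep_def K'_def by blast
  moreover have "v \<in> verts K'"
    using v \<open>w \<noteq> v\<close> by (simp add: K'_def)
  ultimately have "Sd 1 (sphere K' v) \<or> Bd 1 (sphere K' v)"
    by (rule Gstep_sphere)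
  then have "Gstep (Sd 0) (Bd 0) (sphere K' v)"
    unfolding Sd_1 Bd_1 Sstep_def Bstep_def by blast
  moreover have "a \<in> verts (sphere K' v)"
    using edges \<open>a \<noteq> w\<close> \<open>w \<noteq> v\<close> v by (auto simp: K'_def sphere_def)
  ultimately have "verts (sphere (sphere K' v) a) \<noteq> {}"
    by (intro Sd_0_or_Bd_0_nonempty Gstep_sphere)
  moreover have "verts (sphere (sphere K' v) a) = {}"
    using w by (auto simp: K'_def P_def sphere_def)
  ultimately show False
    by simp
qed

subsection \<open>Cones\<close>

definition cone :: "'a graph \<Rightarrow> 'a option graph" where
  "cone G = (insert None (Some ` verts G),
     map_prod Some Some ` edges G \<union> (\<lambda>v. (None, Some v)) ` verts G \<union> (\<lambda>v. (Some v, None)) ` verts G)"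

lemma verts_cone [simp]: "verts (cone G) = insert None (Some ` verts G)"
  by (simp add: cone_def verts_def)

lemma edges_cone [simp]:
  "edges (cone G) = map_prod Some Some ` edges G
     \<union> (\<lambda>v. (None, Some v)) ` verts G \<union> (\<lambda>v. (Some v, None)) ` verts G"
  by (simp add: cone_def edges_def)

lemma is_graph_cone: "is_graph G \<Longrightarrow> is_graph (cone G)"
  unfolding is_graph_def by auto

lemma sphere_cone_apex: "is_graph G \<Longrightarrow> sphere (cone G) None = map_graph Some G"
  unfolding sphere_def is_graph_def by (intro graph_eqI) auto

lemma sphere_cone: "is_graph G \<Longrightarrow> v \<in> verts G \<Longrightarrow> sphere (cone G) (Some v) = cone (sphere G v)"
  unfolding sphere_def is_graph_def by (intro graph_eqI) auto

lemma delete_cone: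
  "is_graph G \<Longrightarrow> v \<in> verts G \<Longrightarrow>
   induce (cone G) (verts (cone G) - {Some v}) = cone (induce G (verts G - {v}))"
  unfolding is_graph_def by (intro graph_eqI) auto

lemma contractible_cone: "is_graph G \<Longrightarrow> contractible (cone G)"
proof (induction "card (verts G)" arbitrary: G rule: less_induct)
  case less
  show ?case
  proof (cases "verts G = {}")
    case True
    then show ?thesis
      using less.prems by (intro contractible.K1) (auto simp: is_graph_cone)
  next
    case False
    then obtain v where v: "v \<in> verts G"
      by auto
    have fin: "finite (verts G)"
      using less.prems by (simp add: is_graph_def)
    show ?thesis
    proof (rule contractible.step[of _ "Some v"])
      show "is_graph (cone G)" "Some v \<in> verts (cone G)"
        using less.prems v by (simp_all add: is_graph_cone)
      have "card (verts (sphere G v)) < card (verts G)"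
        using less.prems v fin unfolding sphere_def is_graph_def by (intro psubset_card_mono) auto
      then show "contractible (sphere (cone G) (Some v))"
        using less.hyps is_graph_sphere[OF less.prems] sphere_cone[OF less.prems v] by simp
      have "card (verts (induce G (verts G - {v}))) < card (verts G)"
        using v fin by (intro psubset_card_mono) auto
      then show "contractible (induce (cone G) (verts (cone G) - {Some v}))"
        using less.hyps is_graph_induce[OF less.prems] delete_cone[OF less.prems v] by simp
    qed
  qed
qed

lemma Gstep_bdry_cone:
  assumes K: "Sd d K" and sph: "\<And>v. v \<in> verts K \<Longrightarrow> Bd d (cone (sphere K v))"
  shows "Gstep (Sd d) (Bd d) (cone K)" and "bdry (Bd d) (cone K) = map_graph Some K"
proof -
  have graph: "is_graph K"
    using K by (rule Sd_is_graph)
  have apex: "Sd d (sphere (cone K) None)"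
    using K Sd_Bd_map_graph[OF graph, of Some] sphere_cone_apex[OF graph] by simp
  have rim: "Bd d (sphere (cone K) (Some v))" if "v \<in> verts K" for v
    using sph sphere_cone[OF graph] that by simp
  show "Gstep (Sd d) (Bd d) (cone K)"
    unfolding Gstep_def using is_graph_cone[OF graph] apex rim Sd_not_Bd[OF apex] by auto
  have "{x \<in> verts (cone K). Bd d (sphere (cone K) x)} = Some ` verts K"
    using rim Sd_not_Bd[OF apex] by auto
  then have "bdry (Bd d) (cone K) = induce (cone K) (Some ` verts K)"
    by (simp add: bdry_def)
  also have "\<dots> = map_graph Some K"
    using graph unfolding is_graph_def by (intro graph_eqI) auto
  finally show "bdry (Bd d) (cone K) = map_graph Some K" .
qed

lemma Bd_Suc_cone:
  assumes K: "Sd d K" and "\<And>v. v \<in> verts K \<Longrightarrow> Bd d (cone (sphere K v))"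
  shows "Bd (Suc d) (cone K)"
  using Gstep_bdry_cone[OF assms] contractible_cone[OF Sd_is_graph[OF K]] K
    Sd_Bd_map_graph[OF Sd_is_graph[OF K], of Some]
  by (simp add: Bd_Suc Bstep_def)

lemma Bd_1_cone: "Sd 0 J \<Longrightarrow> Bd 1 (cone J)"
  using Bd_Suc_cone[of 0 J] by (auto simp: Sd_0 Bd_0 sphere_def is_graph_def)

lemma Bd_2_cone: "Sd 1 K \<Longrightarrow> Bd 2 (cone K)"
  using Bd_Suc_cone[of 1 K, OF _ Bd_1_cone[OF sphere_Sd_1]] by (simp only: Suc_1)

lemma Gd_3_cone:
  assumes "Sd 2 K"
  shows "Gd 3 (cone K)" and "delta 3 (cone K) = map_graph Some K"
  using Gstep_bdry_cone[OF assms Bd_2_cone[OF sphere_Sd_2[OF assms]]]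
  by (simp_all add: Gd_3 delta_3)

subsection \<open>Disjoint unions\<close>

lemma verts_disj_union [simp]: "verts (disj_union A B) = Inl ` verts A \<union> Inr ` verts B"
  by (auto simp: disj_union_def verts_def)

lemma edges_disj_union [simp]:
  "edges (disj_union A B) = map_prod Inl Inl ` edges A \<union> map_prod Inr Inr ` edges B"
  by (auto simp: disj_union_def edges_def)

lemma is_graph_disj_union: "is_graph A \<Longrightarrow> is_graph B \<Longrightarrow> is_graph (disj_union A B)"
  unfolding is_graph_def by auto

lemma sphere_disj_union_Inl:
  "is_graph A \<Longrightarrow> is_graph B \<Longrightarrow> x \<in> verts A \<Longrightarrow>
   sphere (disj_union A B) (Inl x) = map_graph Inl (sphere A x)"
  unfolding sphere_def is_graph_def by (intro graph_eqI) auto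

lemma sphere_disj_union_Inr:
  "is_graph A \<Longrightarrow> is_graph B \<Longrightarrow> x \<in> verts B \<Longrightarrow>
   sphere (disj_union A B) (Inr x) = map_graph Inr (sphere B x)"
  unfolding sphere_def is_graph_def by (intro graph_eqI) auto

lemma disj_union_map_graph:
  "disj_union (map_graph f A) (map_graph g B) = map_graph (map_sum f g) (disj_union A B)"
proof -
  have "map_prod (map_sum f g) (map_sum f g) \<circ> map_prod Inl Inl = map_prod Inl Inl \<circ> map_prod f f"
    "map_prod (map_sum f g) (map_sum f g) \<circ> map_prod Inr Inr = map_prod Inr Inr \<circ> map_prod g g"
    "map_sum f g \<circ> Inl = Inl \<circ> f" "map_sum f g \<circ> Inr = Inr \<circ> g"
    by (auto simp: fun_eq_iff)
  then show ?thesis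
    by (intro graph_eqI) (simp_all only: verts_disj_union edges_disj_union verts_map_graph
        edges_map_graph image_Un image_comp)
qed

lemma Gstep_bdry_disj_union:
  assumes A: "Gstep (Sd d) (Bd d) A" and B: "Gstep (Sd d) (Bd d) B"
  shows "Gstep (Sd d) (Bd d) (disj_union A B)"
    and "bdry (Bd d) (disj_union A B) = disj_union (bdry (Bd d) A) (bdry (Bd d) B)"
proof -
  have a: "is_graph A" and b: "is_graph B"
    using A B by (simp_all add: Gstep_def)
  have l: "Sd d (sphere (disj_union A B) (Inl x)) = Sd d (sphere A x)"
    "Bd d (sphere (disj_union A B) (Inl x)) = Bd d (sphere A x)" if "x \<in> verts A" for x
    using that sphere_disj_union_Inl[OF a b] by (simp_all add: Sd_Bd_map_graph is_graph_sphere a)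
  have r: "Sd d (sphere (disj_union A B) (Inr x)) = Sd d (sphere B x)"
    "Bd d (sphere (disj_union A B) (Inr x)) = Bd d (sphere B x)" if "x \<in> verts B" for x
    using that sphere_disj_union_Inr[OF a b] by (simp_all add: Sd_Bd_map_graph is_graph_sphere b)
  show "Gstep (Sd d) (Bd d) (disj_union A B)"
    using A B l r is_graph_disj_union[OF a b] unfolding Gstep_def by auto
  have "{x \<in> verts (disj_union A B). Bd d (sphere (disj_union A B) x)}
     = Inl ` {x \<in> verts A. Bd d (sphere A x)} \<union> Inr ` {x \<in> verts B. Bd d (sphere B x)}"
    using l r by auto
  then have "bdry (Bd d) (disj_union A B) = induce (disj_union A B)
      (Inl ` {x \<in> verts A. Bd d (sphere A x)} \<union> Inr ` {x \<in> verts B. Bd d (sphere B x)})"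
    by (simp add: bdry_def)
  also have "\<dots> = disj_union (bdry (Bd d) A) (bdry (Bd d) B)"
    by (intro graph_eqI) (auto simp: bdry_def)
  finally show "bdry (Bd d) (disj_union A B) = disj_union (bdry (Bd d) A) (bdry (Bd d) B)" .
qed

lemma cobordantI:
  fixes H :: "'b graph"
  assumes H: "Gd 3 H" and iso: "graph_iso (delta 3 H) (disj_union G1 G2)"
  shows "cobordant G1 G2"
proof -
  have graph: "is_graph H"
    using H by (simp add: Gd_3 Gstep_def)
  then have "finite (verts H)"
    by (simp add: is_graph_def)
  then obtain f :: "'b \<Rightarrow> nat" where f: "inj_on f (verts H)"
    by (metis finite_imp_inj_to_nat_seg)
  interpret relabelling "Sd 2" "Bd 2" "Sd 2" "Bd 2" f
    using Sd_Bd_map_graph by unfold_locales blast+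
  have "Gd 3 (map_graph f H)"
    using Gstep_map_graph[OF graph f] H by (simp add: Gd_3)
  moreover have "graph_iso (delta 3 (map_graph f H)) (delta 3 H)"
  proof -
    have "inj_on f (verts (delta 3 H))"
      using f by (rule inj_on_subset) (auto simp: delta_3 bdry_def)
    then have "graph_iso (delta 3 H) (map_graph f (delta 3 H))"
      using graph_iso_map_graph[OF is_graph_induce[OF graph]] by (simp add: delta_3 bdry_def)
    then have "graph_iso (map_graph f (delta 3 H)) (delta 3 H)"
      by (rule graph_iso_sym)
    then show ?thesis
      using bdry_map_graph[OF graph f] by (simp add: delta_3)
  qed
  ultimately show ?thesis
    unfolding cobordant_def using graph_iso_trans[OF _ iso] by (intro exI[of _ "map_graph f H"]) simp
qed

lemma cobordant_if_Sd_2: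
  assumes G1: "Sd 2 G1" and G2: "Sd 2 G2"
  shows "cobordant G1 G2"
proof (rule cobordantI)
  let ?H = "disj_union (cone G1) (cone G2)"
  have cone1: "Gstep (Sd 2) (Bd 2) (cone G1)" "bdry (Bd 2) (cone G1) = map_graph Some G1"
    using Gd_3_cone[OF G1] by (simp_all add: Gd_3 delta_3)
  have cone2: "Gstep (Sd 2) (Bd 2) (cone G2)" "bdry (Bd 2) (cone G2) = map_graph Some G2"
    using Gd_3_cone[OF G2] by (simp_all add: Gd_3 delta_3)
  show "Gd 3 ?H"
    using Gstep_bdry_disj_union(1)[OF cone1(1) cone2(1)] by (simp add: Gd_3)
  have "delta 3 ?H = map_graph (map_sum Some Some) (disj_union G1 G2)"
    using Gstep_bdry_disj_union(2)[OF cone1(1) cone2(1)] cone1(2) cone2(2)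
    by (simp add: delta_3 disj_union_map_graph)
  moreover have "inj_on (map_sum Some Some) (verts (disj_union G1 G2))"
    by (auto simp: inj_on_def)
  then have "graph_iso (disj_union G1 G2) (map_graph (map_sum Some Some) (disj_union G1 G2))"
    by (rule graph_iso_map_graph[OF is_graph_disj_union[OF Sd_is_graph[OF G1] Sd_is_graph[OF G2]]])
  then have "graph_iso (map_graph (map_sum Some Some) (disj_union G1 G2)) (disj_union G1 G2)"
    by (rule graph_iso_sym)
  ultimately show "graph_iso (delta 3 ?H) (disj_union G1 G2)"
    by simp
qed

theorem mainTheorem6:
  shows "equiv {G :: 'a graph. Sd 2 G} {(G1, G2). Sd 2 G1 \<and> Sd 2 G2 \<and> cobordant G1 G2}"
proof -
  have "{(G1, G2). Sd 2 G1 \<and> Sd 2 G2 \<and> cobordant G1 G2} = {G :: 'a graph. Sd 2 G} \<times> {G. Sd 2 G}"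
    using cobordant_if_Sd_2 by auto
  then show ?thesis
    by (simp add: equiv_def refl_on_def sym_def trans_def)
qed

end
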